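(* Let $i,j,m\in\mathbb{N}$, and let $A=(a_0,\dots,a_i)$ and $B=(b_0,\dots,b_j)$ be finite sequences of positive integers satisfying $m[a_i,\dots,a_0]=[b_0,\dots,b_j]$. Then the concatenation $BA=(b_0,\dots,b_j,a_0,\dots,a_i)$ is an $m$-palindrome if and only if $m[a_i,\dots,a_1]=[b_0,\dots,b_{j-1}]$.
   Context: For a finite sequence $(c_0,\dots,c_k)$ of positive integers, $[c_0,\dots,c_k]$ denotes the value of the finite continued fraction $c_0+\cfrac{1}{c_1+\cfrac{1}{\ddots+\cfrac{1}{c_k}}}$. A finite sequence $(c_0,\dots,c_k)$ of positive integers is an $m$-palindrome ($m\in\mathbb{N}$) if $[c_0,\dots,c_k]=m\,[c_k,\dots,c_0]$. *)

theory Defs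
  imports Complex_Main "HOL-Library.Extended_Real"
begin

text \<open>The empty continued fraction has the standard convention value infinity (= 1/0),
  needed for the degenerate cases i = 0 or j = 0 of the lemma.\<close>
fun cf :: "nat list \<Rightarrow> ereal" where
  "cf [] = \<infinity>"
| "cf (c # cs) = ereal (real c) + 1 / cf cs"

definition pos_seq :: "nat list \<Rightarrow> bool" where
  "pos_seq cs \<longleftrightarrow> cs \<noteq> [] \<and> (\<forall>c\<in>set cs. 0 < c)"

definition m_palindrome :: "nat \<Rightarrow> nat list \<Rightarrow> bool" where
  "m_palindrome m cs \<longleftrightarrow> pos_seq cs \<and> cf cs = ereal (real m) * cf (rev cs)"

end

theory Submission
  imports Defs
begin

(* The continued fraction [c_0,...,c_k] equals p/r, where (p q; r s) is the product of the
   matrices (c_i 1; 1 0); reversing the sequence transposes this matrix, and dropping the first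
   (last) entry promotes the second row (column) to the first. So if A and B have matrices
   (a11 a12; a21 a22) and (b11 b12; b21 b22), the hypothesis reads m a11 b21 = b11 a12 and the
   right-hand side reads m a21 b22 = b12 a22. The matrix of BA is the product of the two, and
   after cancelling its common numerator b11 a11 + b12 a21 the palindrome condition for BA is
   m (b21 a11 + b22 a21) = b11 a12 + b12 a22, the sum of the two equations. *)

(* (a, b, c, d) is the matrix (a b; c d). *)
type_synonym mat2 = "nat \<times> nat \<times> nat \<times> nat"

fun mat2_mult :: "mat2 \<Rightarrow> mat2 \<Rightarrow> mat2" where
  "mat2_mult (a, b, c, d) (e, f, g, h) = (a*e + b*g, a*f + b*h, c*e + d*g, c*f + d*h)"

fun mat2_transpose :: "mat2 \<Rightarrow> mat2" where
  "mat2_transpose (a, b, c, d) = (a, c, b, d)"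

fun cf_matrix :: "nat list \<Rightarrow> mat2" where
  "cf_matrix [] = (1, 0, 0, 1)"
| "cf_matrix (c # cs) = mat2_mult (c, 1, 1, 0) (cf_matrix cs)"

definition ereal_frac :: "nat \<Rightarrow> nat \<Rightarrow> ereal" where
  "ereal_frac p q = (if q = 0 then \<infinity> else ereal (real p / real q))"

lemma mat2_mult_assoc: "mat2_mult (mat2_mult A B) C = mat2_mult A (mat2_mult B C)"
  by (cases A; cases B; cases C) (simp add: algebra_simps)

lemma mat2_mult_one [simp]:
  "mat2_mult (1, 0, 0, 1) A = A" "mat2_mult (Suc 0, 0, 0, Suc 0) A = A" "mat2_mult A (1, 0, 0, 1) = A"
  by (cases A; simp)+

lemma mat2_transpose_mult: "mat2_transpose (mat2_mult A B) = mat2_mult (mat2_transpose B) (mat2_transpose A)"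
  by (cases A; cases B) (simp add: algebra_simps)

lemma cf_matrix_append: "cf_matrix (xs @ ys) = mat2_mult (cf_matrix xs) (cf_matrix ys)"
  by (induction xs) (simp_all add: mat2_mult_assoc)

lemma cf_matrix_rev: "cf_matrix (rev xs) = mat2_transpose (cf_matrix xs)"
proof (induction xs)
  case (Cons x xs)
  have "cf_matrix (rev (x # xs)) = mat2_mult (cf_matrix (rev xs)) (cf_matrix [x])"
    by (simp add: cf_matrix_append)
  also have "\<dots> = mat2_transpose (cf_matrix (x # xs))"
    using Cons by (simp add: mat2_transpose_mult)
  finally show ?case .
qed simp

lemma cf_matrix_pos:
  assumes "\<forall>x\<in>set xs. 0 < x" and "cf_matrix xs = (p, q, r, s)"
  shows "0 < p" and "xs \<noteq> [] \<Longrightarrow> 0 < q \<and> 0 < r"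
proof -
  have "0 < p \<and> (xs \<noteq> [] \<longrightarrow> 0 < q \<and> 0 < r)"
    using assms
  proof (induction xs arbitrary: p q r s)
    case (Cons x xs)
    obtain p' q' r' s' where "cf_matrix xs = (p', q', r', s')" by (cases "cf_matrix xs")
    with Cons show ?case by (cases xs) auto
  qed simp
  then show "0 < p" and "xs \<noteq> [] \<Longrightarrow> 0 < q \<and> 0 < r" by auto
qed

lemma cf_eq_ereal_frac:
  assumes "\<forall>x\<in>set xs. 0 < x" and "cf_matrix xs = (p, q, r, s)"
  shows "cf xs = ereal_frac p r"
  using assms
proof (induction xs arbitrary: p q r s)
  case Nil then show ?case by (simp add: ereal_frac_def)
next
  case (Cons x xs)
  obtain p' q' r' s' where m: "cf_matrix xs = (p', q', r', s')" by (cases "cf_matrix xs")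
  have ih: "cf xs = ereal_frac p' r'" using Cons m by auto
  have "0 < p'" using cf_matrix_pos(1)[OF _ m] Cons.prems(1) by simp
  moreover have "p = x*p' + r'" "r = p'" using Cons.prems(2) m by auto
  ultimately show ?case
    using ih by (cases "r' = 0") (simp_all add: ereal_frac_def one_ereal_def field_simps)
qed

lemma cf_rev_eq_ereal_frac:
  assumes "\<forall>x\<in>set xs. 0 < x" and "cf_matrix xs = (p, q, r, s)"
  shows "cf (rev xs) = ereal_frac p q"
  using assms cf_eq_ereal_frac[of "rev xs" p r q s] by (simp add: cf_matrix_rev)

lemma cf_rev_tl_eq_ereal_frac:
  assumes "\<forall>x\<in>set xs. 0 < x" and "xs \<noteq> []" and "cf_matrix xs = (p, q, r, s)"
  shows "cf (rev (tl xs)) = ereal_frac r s"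
proof -
  obtain x ys where xs: "xs = x # ys" using assms(2) by (cases xs) auto
  obtain p' q' r' s' where m: "cf_matrix ys = (p', q', r', s')" by (cases "cf_matrix ys")
  have "p' = r" "q' = s" using assms(3) xs m by auto
  then show ?thesis using cf_rev_eq_ereal_frac[OF _ m] assms(1) xs by simp
qed

lemma cf_butlast_eq_ereal_frac:
  assumes "\<forall>x\<in>set xs. 0 < x" and "xs \<noteq> []" and "cf_matrix xs = (p, q, r, s)"
  shows "cf (butlast xs) = ereal_frac q s"
proof -
  obtain ys y where xs: "xs = ys @ [y]" using assms(2) by (metis rev_exhaust)
  obtain p' q' r' s' where m: "cf_matrix ys = (p', q', r', s')" by (cases "cf_matrix ys")
  have "p' = q" "r' = s" using assms(3) xs m by (auto simp: cf_matrix_append)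
  then show ?thesis using cf_eq_ereal_frac[OF _ m] assms(1) xs by simp
qed

lemma mult_ereal_frac_eq_iff:
  assumes "0 < m" and "0 < p" and "0 < r"
  shows "ereal (real m) * ereal_frac p q = ereal_frac r s \<longleftrightarrow> m * p * s = r * q"
proof (cases "q = 0 \<or> s = 0")
  case True
  then show ?thesis using assms by (auto simp: ereal_frac_def)
next
  case False
  then have "ereal (real m) * ereal_frac p q = ereal_frac r s
      \<longleftrightarrow> real m * real p * real s = real r * real q"
    by (simp add: ereal_frac_def field_simps)
  also have "\<dots> \<longleftrightarrow> m * p * s = r * q"
    by (metis of_nat_eq_iff of_nat_mult)
  finally show ?thesis .
qed

lemma m_palindrome_append_iff:
  assumes "pos_seq as" and "pos_seq bs" and "0 < m"
    and "cf_matrix as = (a11, a12, a21, a22)" and "cf_matrix bs = (b11, b12, b21, b22)"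
  shows "m_palindrome m (bs @ as) \<longleftrightarrow> m * (b21*a11 + b22*a21) = b11*a12 + b12*a22"
proof -
  let ?n = "b11*a11 + b12*a21"
  have pos: "\<forall>x\<in>set (bs @ as). 0 < x" and "bs @ as \<noteq> []"
    using assms(1,2) by (auto simp: pos_seq_def)
  then have "pos_seq (bs @ as)" by (simp add: pos_seq_def)
  have m: "cf_matrix (bs @ as) = (?n, b11*a12 + b12*a22, b21*a11 + b22*a21, b21*a12 + b22*a22)"
    using assms(4,5) by (simp add: cf_matrix_append)
  have "0 < ?n"
    using cf_matrix_pos(1)[OF _ assms(4)] cf_matrix_pos(1)[OF _ assms(5)] assms(1,2)
    by (simp add: pos_seq_def)
  have "m_palindrome m (bs @ as) \<longleftrightarrow>
      ereal (real m) * ereal_frac ?n (b11*a12 + b12*a22) = ereal_frac ?n (b21*a11 + b22*a21)"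
    unfolding m_palindrome_def
    using \<open>pos_seq (bs @ as)\<close> cf_eq_ereal_frac[OF pos m] cf_rev_eq_ereal_frac[OF pos m] by auto
  also have "\<dots> \<longleftrightarrow> ?n * (m * (b21*a11 + b22*a21)) = ?n * (b11*a12 + b12*a22)"
    using mult_ereal_frac_eq_iff[OF assms(3) \<open>0 < ?n\<close> \<open>0 < ?n\<close>] by (simp add: ac_simps)
  also have "\<dots> \<longleftrightarrow> m * (b21*a11 + b22*a21) = b11*a12 + b12*a22"
    by (rule mult_left_cancel) (use \<open>0 < ?n\<close> in simp)
  finally show ?thesis .
qed

theorem lemma3p4:
  fixes m :: nat and as bs :: "nat list"
  assumes "pos_seq as" and "pos_seq bs"
    and "ereal (real m) * cf (rev as) = cf bs"
  shows "m_palindrome m (bs @ as) \<longleftrightarrow>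
         ereal (real m) * cf (rev (tl as)) = cf (butlast bs)"
proof -
  have pa: "\<forall>x\<in>set as. 0 < x" "as \<noteq> []" and pb: "\<forall>x\<in>set bs. 0 < x" "bs \<noteq> []"
    using assms(1,2) by (auto simp: pos_seq_def)
  obtain a11 a12 a21 a22 where A: "cf_matrix as = (a11, a12, a21, a22)"
    by (cases "cf_matrix as")
  obtain b11 b12 b21 b22 where B: "cf_matrix bs = (b11, b12, b21, b22)"
    by (cases "cf_matrix bs")
  have "0 < a11" "0 < a12" "0 < a21" "0 < b11" "0 < b12" "0 < b21"
    using cf_matrix_pos[OF pa(1) A] cf_matrix_pos[OF pb(1) B] pa(2) pb(2) by auto
  note cfs = cf_rev_eq_ereal_frac[OF pa(1) A] cf_eq_ereal_frac[OF pb(1) B]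
    cf_rev_tl_eq_ereal_frac[OF pa A] cf_butlast_eq_ereal_frac[OF pb B]
  have "0 < m"
    using assms(3) cfs \<open>0 < a12\<close> \<open>0 < b11\<close> \<open>0 < b21\<close>
    by (cases "m = 0") (auto simp: ereal_frac_def zero_ereal_def)
  have hyp: "m * a11 * b21 = b11 * a12"
    using assms(3) cfs mult_ereal_frac_eq_iff[OF \<open>0 < m\<close> \<open>0 < a11\<close> \<open>0 < b11\<close>] by simp
  have "m_palindrome m (bs @ as) \<longleftrightarrow> m * a21 * b22 = b12 * a22"
    using m_palindrome_append_iff[OF assms(1,2) \<open>0 < m\<close> A B] hyp by (simp add: algebra_simps)
  also have "\<dots> \<longleftrightarrow> ereal (real m) * cf (rev (tl as)) = cf (butlast bs)"
    using cfs mult_ereal_frac_eq_iff[OF \<open>0 < m\<close> \<open>0 < a21\<close> \<open>0 < b12\<close>] by simp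
  finally show ?thesis .
qed

end
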